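(* Let $n\ge1$ be an integer, $p\in(0,1)$, $q:=1-p$, and suppose $n\le\frac pq\cdot\frac1{u_{**}}$, where $u_{**}:=\frac{u_*}{1-u_*}$ and $u_*$ is the unique solution in $(0,1)$ of $\ln\frac{1-u}{-\ln u}-1-\frac12\frac{(1+u)\ln u}{1-u}=0$. Define $\tilde Q(x):=Q_n^{\mathrm{LC}}(x)$ for $x\le n$ and $\tilde Q(x):=q_{n-1}^{\,n-x}q_n^{\,x-n+1}$ for $x\ge n-1$ (the two expressions agree on $[n-1,n]$). Then for all $x\in[n,n+\frac12]$, $$Q_n^{\mathrm{Lin}}\Big(x+\frac12\Big)\le\tilde Q(x).$$
   Context: $B_n$ is binomial with parameters $n,p$; $Q_n(x):=\mathbf{P}(B_n\ge x)$ and $q_j:=Q_n(j)$ for $j\in\mathbb{Z}$; $Q_n^{\mathrm{LC}}$ is the least log-concave majorant of $Q_n$ on $\mathbb{R}$ (smallest $g\ge Q_n$ with $g\ge0$ and $\ln g$ concave, values $-\infty$ allowed); $Q_n^{\mathrm{Lin}}$ is the linear interpolation of $Q_n$ over $\mathbb{Z}$: $Q_n^{\mathrm{Lin}}(x)=(1-(x-j))q_j+(x-j)q_{j+1}$ for $j\le x\le j+1$, $j\in\mathbb{Z}$. *)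

theory Defs
  imports "HOL-Probability.Probability"
begin

definition binom_tail :: "nat \<Rightarrow> real \<Rightarrow> real \<Rightarrow> real" where
  "binom_tail n p x = measure_pmf.prob (binomial_pmf n p) {k. real k \<ge> x}"

definition qseq :: "nat \<Rightarrow> real \<Rightarrow> int \<Rightarrow> real" where
  "qseq n p j = binom_tail n p (real_of_int j)"

text \<open>Log-concavity of a nonnegative function (ln g concave, value -infinity allowed):
  g((1-t)x+ty) >= g(x)^(1-t) g(y)^t for t in (0,1).\<close>
definition log_concave_fun :: "(real \<Rightarrow> real) \<Rightarrow> bool" where
  "log_concave_fun g \<longleftrightarrow> (\<forall>x. g x \<ge> 0) \<and>
     (\<forall>x y t. 0 < t \<and> t < 1 \<longrightarrow> g ((1 - t) * x + t * y) \<ge> g x powr (1 - t) * g y powr t)"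

definition binom_tail_LC :: "nat \<Rightarrow> real \<Rightarrow> real \<Rightarrow> real" where
  "binom_tail_LC n p x =
     Inf {g x | g. log_concave_fun g \<and> (\<forall>y. g y \<ge> binom_tail n p y)}"

definition binom_tail_Lin :: "nat \<Rightarrow> real \<Rightarrow> real \<Rightarrow> real" where
  "binom_tail_Lin n p x =
     (let j = \<lfloor>x\<rfloor> in (1 - (x - of_int j)) * qseq n p j + (x - of_int j) * qseq n p (j + 1))"

definition u_star :: real where
  "u_star = (THE u. 0 < u \<and> u < 1 \<and>
      ln ((1 - u) / (- ln u)) - 1 - (1/2) * ((1 + u) * ln u / (1 - u)) = 0)"

definition u_star2 :: real where
  "u_star2 = u_star / (1 - u_star)"

definition Qtilde :: "nat \<Rightarrow> real \<Rightarrow> real \<Rightarrow> real" where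
  "Qtilde n p x = (if x \<le> real n then binom_tail_LC n p x
     else qseq n p (int n - 1) powr (real n - x) * qseq n p (int n) powr (x - real n + 1))"

end

theory Submission
  imports Defs
begin

(* Write x = n + t with 0 <= t <= 1/2. Since q_(n+1) = 0, the interpolant at x + 1/2 lies on
   its last segment and equals (1/2 - t) q_n, whereas Qtilde(x) >= q_n r^t with
   r = q_n / q_(n-1) = p / (p + n q) (for t = 0 because the log-concave majorant dominates Q_n).
   The hypothesis on n says exactly r >= u_*, so it remains to show 1/2 - t <= u_*^t.
   In the variable L = -ln u the equation defining u_* becomes G(L) = 0 for an explicit G which
   is negative on (0, 5/2] and strictly increasing beyond; hence its unique root L satisfies
   L > 5/2, and then G(L) = 0 yields L <= 2 + 2 ln L. The tangent line of exp at ln L - L t gives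
   exp (-L t) >= (1 + ln L) / L - t >= 1/2 - t. *)

lemma binom_tail_eq_prob:
  assumes "0 < p" "p < 1"
  shows "binom_tail n p x = measure_pmf.prob (binomial_pmf n p) {k. k \<le> n \<and> x \<le> real k}"
proof -
  have "{k. x \<le> real k} \<inter> set_pmf (binomial_pmf n p) = {k. k \<le> n \<and> x \<le> real k}"
    using assms by auto
  then show ?thesis
    unfolding binom_tail_def by (metis measure_Int_set_pmf)
qed

lemma binom_tail_eq_0:
  assumes "0 < p" "p < 1" "real n < x"
  shows "binom_tail n p x = 0"
proof -
  have "{k. k \<le> n \<and> x \<le> real k} = {}"
    using assms(3) by auto
  then show ?thesis
    by (simp only: binom_tail_eq_prob[OF assms(1,2)]) simp
qed

lemma binom_tail_eq_power:
  assumes "0 < p" "p < 1" "real n - 1 < x" "x \<le> real n"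
  shows "binom_tail n p x = p ^ n"
proof -
  have "{k. k \<le> n \<and> x \<le> real k} = {n}"
    using assms(3,4) by force
  then show ?thesis
    using binom_tail_eq_prob[OF assms(1,2)] assms(1,2) by (simp add: measure_pmf_single)
qed

lemma qseq_n_minus_1:
  assumes "0 < p" "p < 1" "1 \<le> n"
  shows "qseq n p (int n - 1) = p ^ (n - 1) * (p + real n * (1 - p))"
proof -
  have "{k. k \<le> n \<and> real_of_int (int n - 1) \<le> real k} = {n - 1, n}"
    using assms(3) by auto
  then have "qseq n p (int n - 1) = pmf (binomial_pmf n p) (n - 1) + pmf (binomial_pmf n p) n"
    unfolding qseq_def binom_tail_eq_prob[OF assms(1,2)]
    using assms by (subst measure_measure_pmf_finite) auto
  also have "\<dots> = p ^ (n - 1) * (p + real n * (1 - p))"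
    using assms binomial_symmetric[of 1 n] by (simp add: algebra_simps power_eq_if)
  finally show ?thesis .
qed

lemma binom_tail_Lin_last_segment:
  assumes "0 < p" "p < 1" "real n \<le> y" "y \<le> real n + 1"
  shows "binom_tail_Lin n p y = (real n + 1 - y) * p ^ n"
proof (cases "y = real n + 1")
  case True
  then have "\<lfloor>y\<rfloor> = int n + 1" by simp
  then show ?thesis
    using True binom_tail_eq_0[OF assms(1,2)] by (simp add: binom_tail_Lin_def qseq_def)
next
  case False
  then have "\<lfloor>y\<rfloor> = int n" using assms(3,4) by (simp add: floor_eq_iff)
  then show ?thesis
    using binom_tail_eq_0[OF assms(1,2)] binom_tail_eq_power[OF assms(1,2)]
    by (simp add: binom_tail_Lin_def qseq_def algebra_simps)
qed

lemma binom_tail_le_LC: "binom_tail n p x \<le> binom_tail_LC n p x"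
proof -
  let ?majorants = "{g x | g. log_concave_fun g \<and> (\<forall>y. g y \<ge> binom_tail n p y)}"
  have "log_concave_fun (\<lambda>_. 1) \<and> (\<forall>y. binom_tail n p y \<le> 1)"
    unfolding log_concave_fun_def binom_tail_def by simp
  then have "?majorants \<noteq> {}"
    by blast
  then show ?thesis
    unfolding binom_tail_LC_def by (rule cInf_greatest) auto
qed

lemma Qtilde_ge_geometric:
  assumes "0 < p" "p < 1" "1 \<le> n" "real n \<le> x"
  shows "p ^ n * (p / (p + real n * (1 - p))) powr (x - real n) \<le> Qtilde n p x"
proof -
  define a where "a = p + real n * (1 - p)"
  have "0 < a" using assms unfolding a_def by (intro add_pos_nonneg) auto
  have qn: "qseq n p (int n) = p ^ n"
    using binom_tail_eq_power[OF assms(1,2)] by (simp add: qseq_def)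
  have pn: "p ^ n = p ^ (n - 1) * p"
    using assms(3) by (simp add: power_eq_if)
  have "p ^ n * (p / a) powr (x - real n) \<le> Qtilde n p x"
  proof (cases "x = real n")
    case True
    then have "p ^ n * (p / a) powr (x - real n) = binom_tail n p x"
      using qn \<open>0 < a\<close> assms(1) by (simp add: qseq_def)
    also have "\<dots> \<le> Qtilde n p x"
      using True binom_tail_le_LC by (simp add: Qtilde_def)
    finally show ?thesis .
  next
    case False
    then have "Qtilde n p x
        = (p ^ (n - 1) * a) powr (real n - x) * (p ^ (n - 1) * p) powr (x - real n + 1)"
      using assms qn by (simp add: Qtilde_def qseq_n_minus_1 pn a_def)
    also have "\<dots> = p ^ n * (p / a) powr (x - real n)"
      using \<open>0 < a\<close> assms(1) unfolding pn
      by (simp add: powr_add powr_diff powr_mult powr_divide powr_minus field_simps)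
    finally show ?thesis by simp
  qed
  then show ?thesis by (simp add: a_def)
qed

lemma le_tail_ratio_of_size_bound:
  fixes u p :: real
  assumes "0 < u" "u < 1" "0 < p" "p < 1" "real n \<le> (p / (1 - p)) * (1 / (u / (1 - u)))"
  shows "u \<le> p / (p + real n * (1 - p))"
proof -
  have "real n * ((1 - p) * u) \<le> p * (1 - u)"
    using assms by (simp add: field_simps)
  moreover have "0 < p + real n * (1 - p)"
    using assms by (intro add_pos_nonneg) auto
  ultimately show ?thesis
    by (simp add: le_divide_eq algebra_simps)
qed

lemma exp_gt_Maclaurin_even:
  fixes x :: real
  assumes "even k" "x \<noteq> 0"
  shows "(\<Sum>m<k. x ^ m / fact m) < exp x"
proof (cases "k = 0")
  case True
  then show ?thesis by simp
next
  case False
  then obtain t where "exp x = (\<Sum>m<k. x ^ m / fact m) + exp t / fact k * x ^ k"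
    using Maclaurin_exp_lt[of x k] assms(2) by auto
  moreover have "0 < exp t / fact k * x ^ k"
    using assms by (simp add: zero_less_power_eq)
  ultimately show ?thesis by linarith
qed

lemma exp_gt_Maclaurin_6:
  fixes x :: real
  assumes "x \<noteq> 0"
  shows "1 + x + x^2/2 + x^3/6 + x^4/24 + x^5/120 < exp x"
proof -
  have "even (6::nat)" by simp
  from exp_gt_Maclaurin_even[OF this assms] show ?thesis
    by (simp add: eval_nat_numeral fact_numeral)
qed

definition ustar_eqn :: "real \<Rightarrow> real" where
  "ustar_eqn u = ln ((1 - u) / (- ln u)) - 1 - (1/2) * ((1 + u) * ln u / (1 - u))"

definition ustar_eqn_log :: "real \<Rightarrow> real" where
  "ustar_eqn_log L = ln (1 - exp (-L)) - ln L - 1 + L/2 + L/(exp L - 1)"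

lemma ustar_eqn_exp_minus:
  assumes "0 < L"
  shows "ustar_eqn (exp (-L)) = ustar_eqn_log L"
proof -
  have "0 < 1 - exp (-L)" using assms by simp
  then have "ln ((1 - exp (-L)) / L) = ln (1 - exp (-L)) - ln L"
    using assms by (simp add: ln_div)
  moreover have "(1/2) * ((1 + exp (-L)) * L / (1 - exp (-L))) = L/2 + L / (exp L - 1)"
    using assms by (simp add: exp_minus field_simps)
  ultimately show ?thesis
    unfolding ustar_eqn_def ustar_eqn_log_def by simp
qed

lemma ustar_eqn_log_deriv:
  assumes "0 < L"
  shows "(ustar_eqn_log has_real_derivative
    ((L - 2) * (exp L - 1)^2 + 4 * L * (exp L - 1) - 2 * L^2 * exp L) / (2 * L * (exp L - 1)^2)) (at L)"
proof -
  define E where "E = exp L"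
  have pos: "1 < E" "0 < 1 - exp (-L)" using assms by (auto simp: E_def)
  have "(ustar_eqn_log has_real_derivative
      exp (-L) / (1 - exp (-L)) - 1 / L + 1/2 + ((exp L - 1) - L * exp L) / (exp L - 1)^2) (at L)"
    unfolding ustar_eqn_log_def[abs_def]
    by (rule derivative_eq_intros refl | use assms pos in \<open>force simp: E_def\<close>)+
      (use assms pos in \<open>simp add: E_def field_simps power2_eq_square\<close>)
  moreover have "exp (-L) / (1 - exp (-L)) = 1 / (E - 1)"
    using pos by (simp add: E_def exp_minus field_simps)
  moreover have "1 / (E - 1) - 1 / L + 1/2 + ((E - 1) - L * E) / (E - 1)^2
      = ((L - 2) * (E - 1)^2 + 4 * L * (E - 1) - 2 * L^2 * E) / (2 * L * (E - 1)^2)"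
  proof -
    have "E - 1 \<noteq> 0" "L \<noteq> 0" using pos assms by auto
    then show ?thesis by (simp add: divide_simps) (simp add: algebra_simps power2_eq_square)
  qed
  ultimately show ?thesis by (simp add: E_def)
qed

lemma ustar_eqn_log_deriv_numerator_pos:
  fixes L :: real
  assumes "5/2 \<le> L"
  shows "0 < (L - 2) * (exp L - 1)^2 + 4 * L * (exp L - 1) - 2 * L^2 * exp L"
proof -
  \<comment> \<open>K is increasing in E for E \<ge> 1 + L, so it suffices to check it at the
    Taylor polynomial P < exp L.\<close>
  define K where "K E = (L - 2) * (E - 1)^2 + 4 * L * (E - 1) - 2 * L^2 * E" for E
  define P where "P = 1 + L + L^2/2 + L^3/6 + L^4/24"
  have "0 < L^5 / 120" using assms by simp
  then have "P < exp L"
    using exp_gt_Maclaurin_6[of L] assms unfolding P_def by linarith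
  moreover have "1 + L \<le> P"
    using assms unfolding P_def by (simp add: add_nonneg_nonneg)
  ultimately have "0 \<le> (exp L - P) * (L - 2) * (exp L + P - 2 - 2 * L)"
    using assms by (intro mult_nonneg_nonneg) auto
  also have "\<dots> = K (exp L) - K P"
    unfolding K_def by (simp add: algebra_simps power2_eq_square)
  finally have "K P \<le> K (exp L)" by simp
  define s where "s = L - 5/2"
  have "K P = L^3 * (26981/36864 + (16159/3072) * s + (13309/3072) * s^2 + (629/384) * s^3
       + (257/768) * s^4 + (7/192) * s^5 + (1/576) * s^6)"
    unfolding K_def P_def s_def by (simp add: eval_nat_numeral field_simps)
  also have "\<dots> > 0"
    using assms unfolding s_def by (intro mult_pos_pos add_pos_nonneg) auto
  finally show ?thesis
    using \<open>K P \<le> K (exp L)\<close> unfolding K_def by linarith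
qed

lemma ustar_eqn_log_strict_mono:
  assumes "5/2 \<le> a" "a < b"
  shows "ustar_eqn_log a < ustar_eqn_log b"
  using assms(2)
proof (rule DERIV_pos_imp_increasing)
  fix L assume "a \<le> L"
  with assms(1) have "5/2 \<le> L" by linarith
  then show "\<exists>y. DERIV ustar_eqn_log L :> y \<and> y > 0"
    using ustar_eqn_log_deriv[of L] ustar_eqn_log_deriv_numerator_pos[of L]
    by (intro exI conjI) (auto intro!: divide_pos_pos)
qed

lemma ustar_eqn_log_neg:
  assumes "0 < L" "L \<le> 5/2"
  shows "ustar_eqn_log L < 0"
proof -
  define A where "A = L^2/6 - L^3/24 + L^4/120"
  define D where "D = 1 + L/2 + L^2/6 + L^3/24 + L^4/120"
  have "0 < D" using assms unfolding D_def by (intro add_pos_nonneg) auto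
  have "ln (1 - exp (-L)) - ln L \<le> (1 - exp (-L)) / L - 1"
    using ln_le_minus_one[of "(1 - exp (-L)) / L"] assms by (simp add: ln_div)
  moreover have "(1 - exp (-L)) / L < 1 - L/2 + A"
  proof -
    have "1 - exp (-L) < L * (1 - L/2 + A)"
      using exp_gt_Maclaurin_6[of "-L"] assms by (simp add: A_def algebra_simps power_def)
    then show ?thesis using assms by (simp add: divide_less_eq mult.commute)
  qed
  moreover have "L / (exp L - 1) < 1 / D"
  proof -
    have "L * D < exp L - 1"
      using exp_gt_Maclaurin_6[of L] assms by (simp add: D_def algebra_simps power_def)
    then show ?thesis using assms \<open>0 < D\<close> by (simp add: divide_simps mult.commute)
  qed
  moreover have "1 / D < 1 - A"
  proof -
    have pw: "L^k \<le> (5/2)^k" for k :: nat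
      using power_mono[of L "5/2" k] assms by simp
    have "L^3 \<le> 125/8" "L^4 \<le> 625/16" "L^5 \<le> 3125/32" "L^7 \<le> 78125/128"
      using pw[of 3] pw[of 4] pw[of 5] pw[of 7] by (simp_all add: power_divide)
    then have "0 < L * (1/2 - L^3/144 - L^4/240 - L^5/960 - L^7/14400)"
      using assms by (intro mult_pos_pos) auto
    also have "\<dots> = D * (1 - A) - 1"
      by (simp add: D_def A_def algebra_simps power_def)
    finally show ?thesis using \<open>0 < D\<close> by (simp add: divide_simps mult.commute)
  qed
  ultimately show ?thesis unfolding ustar_eqn_log_def by linarith
qed

lemma ustar_eqn_log_16_pos: "0 < ustar_eqn_log 16"
proof -
  have "16 < exp (4::real)"
    using exp_gt_Maclaurin_6[of 4] by simp
  then have "ln (16::real) < 4"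
    using ln_less_cancel_iff[of 16 "exp 4"] by simp
  moreover have "exp (-16::real) \<le> 1/2"
    using exp_ge_add_one_self[of 16] by (simp add: exp_minus divide_simps)
  then have "- ln 2 \<le> ln (1 - exp (-16::real))"
    using ln_le_cancel_iff[of "1/2" "1 - exp (-16)"] by (simp add: ln_div)
  moreover have "0 \<le> 16 / (exp 16 - 1::real)"
    by simp
  ultimately show ?thesis
    unfolding ustar_eqn_log_def using ln_2_less_1 by linarith
qed

lemma ex1_ustar_eqn_log_root: "\<exists>!L. 0 < L \<and> ustar_eqn_log L = 0"
proof -
  have "continuous_on {5/2..16} ustar_eqn_log"
    by (intro continuous_at_imp_continuous_on ballI DERIV_isCont[OF ustar_eqn_log_deriv]) auto
  then obtain L where L: "5/2 \<le> L" "ustar_eqn_log L = 0"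
    using IVT'[of ustar_eqn_log "5/2" 0 16] ustar_eqn_log_neg[of "5/2"] ustar_eqn_log_16_pos by auto
  moreover have "L' = L" if "0 < L'" "ustar_eqn_log L' = 0" for L'
  proof -
    have "5/2 < L'" using ustar_eqn_log_neg[of L'] that by force
    then show ?thesis
      using ustar_eqn_log_strict_mono[of L L'] ustar_eqn_log_strict_mono[of L' L] L that
      by (cases L L' rule: linorder_cases) auto
  qed
  ultimately show ?thesis by (intro ex1I[of _ L]) auto
qed

lemma ex1_ustar_eqn_root: "\<exists>!u. 0 < u \<and> u < 1 \<and> ustar_eqn u = 0"
proof -
  obtain L where L: "0 < L" "ustar_eqn_log L = 0"
    and L_unique: "\<And>L'. 0 < L' \<Longrightarrow> ustar_eqn_log L' = 0 \<Longrightarrow> L' = L"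
    using ex1_ustar_eqn_log_root by blast
  show ?thesis
  proof (rule ex1I[of _ "exp (-L)"])
    show "0 < exp (-L) \<and> exp (-L) < 1 \<and> ustar_eqn (exp (-L)) = 0"
      using L by (simp add: ustar_eqn_exp_minus)
  next
    fix u assume u: "0 < u \<and> u < 1 \<and> ustar_eqn u = 0"
    then have "ustar_eqn_log (- ln u) = 0"
      using ustar_eqn_exp_minus[of "- ln u"] by simp
    then have "- ln u = L"
      using L_unique u by simp
    then show "u = exp (-L)"
      using u by auto
  qed
qed

lemma u_star_root: "0 < u_star" "u_star < 1" "ustar_eqn_log (- ln u_star) = 0"
proof -
  have "0 < u_star \<and> u_star < 1 \<and> ustar_eqn u_star = 0"
    unfolding u_star_def using theI'[OF ex1_ustar_eqn_root] by (simp add: ustar_eqn_def)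
  then show "0 < u_star" "u_star < 1" "ustar_eqn_log (- ln u_star) = 0"
    using ustar_eqn_exp_minus[of "- ln u_star"] by auto
qed

lemma ustar_eqn_log_root_le:
  assumes "0 < L" "ustar_eqn_log L = 0"
  shows "L \<le> 2 + 2 * ln L"
proof -
  define m where "m = exp (-L)"
  have "5/2 < L" using ustar_eqn_log_neg[of L] assms by force
  have m: "0 < m" "m < 1" using assms by (auto simp: m_def)
  have "L / (exp L - 1) = L * m / (1 - m)"
    using m by (simp add: m_def exp_minus field_simps)
  then have "ln L = ln (1 - m) - 1 + L/2 + L * m / (1 - m)"
    using assms(2) unfolding ustar_eqn_log_def m_def[symmetric] by simp
  moreover have "- m / (1 - m) \<le> ln (1 - m)"
    using ln_le_minus_one[of "1 / (1 - m)"] m by (simp add: ln_div field_simps)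
  moreover have "m / (1 - m) \<le> L * m / (1 - m)"
    using \<open>5/2 < L\<close> m by (simp add: divide_right_mono)
  ultimately show ?thesis by linarith
qed

lemma half_minus_le_exp:
  fixes L t :: real
  assumes "0 < L" "L \<le> 2 + 2 * ln L" "0 \<le> t"
  shows "1/2 - t \<le> exp (- L * t)"
proof -
  have "(1 + ln L) / L - t = (1 + (ln L - L * t)) / L"
    using assms by (simp add: field_simps)
  also have "\<dots> \<le> exp (ln L - L * t) / L"
    using assms by (simp add: divide_right_mono exp_ge_add_one_self)
  also have "\<dots> = exp (- L * t)"
    using assms by (simp add: exp_diff exp_minus inverse_eq_divide)
  finally have "(1 + ln L) / L - t \<le> exp (- L * t)" .
  moreover have "1/2 \<le> (1 + ln L) / L"
    using assms by (simp add: field_simps)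
  ultimately show ?thesis by linarith
qed

lemma half_minus_le_u_star_powr:
  assumes "0 \<le> t"
  shows "1/2 - t \<le> u_star powr t"
proof -
  have "0 < - ln u_star"
    using u_star_root by simp
  then have "1/2 - t \<le> exp (- (- ln u_star) * t)"
    using half_minus_le_exp ustar_eqn_log_root_le u_star_root assms by blast
  then show ?thesis
    using u_star_root by (simp add: powr_def mult.commute)
qed

theorem lemma3p6:
  fixes n :: nat and p x :: real
  assumes "n \<ge> 1" and "0 < p" and "p < 1"
    and "real n \<le> (p / (1 - p)) * (1 / u_star2)"
    and "real n \<le> x" and "x \<le> real n + 1/2"
  shows "binom_tail_Lin n p (x + 1/2) \<le> Qtilde n p x"
proof -
  define r where "r = p / (p + real n * (1 - p))"
  have "u_star \<le> r"
    unfolding r_def using le_tail_ratio_of_size_bound u_star_root assms(2-4) u_star2_def by metis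
  have "binom_tail_Lin n p (x + 1/2) = p ^ n * (1/2 - (x - real n))"
    using binom_tail_Lin_last_segment[of p n "x + 1/2"] assms by simp
  also have "\<dots> \<le> p ^ n * u_star powr (x - real n)"
    using half_minus_le_u_star_powr[of "x - real n"] assms by simp
  also have "\<dots> \<le> p ^ n * r powr (x - real n)"
    using \<open>u_star \<le> r\<close> u_star_root assms by (simp add: powr_mono2)
  also have "\<dots> \<le> Qtilde n p x"
    using Qtilde_ge_geometric assms unfolding r_def by simp
  finally show ?thesis .
qed

end
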